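(* There is no finite group $G$ with $\pi_e(G)\subseteq\{1,2,3,4,6\}$ having precisely four cyclic subgroups $H_1,H_2,H_3,H_4$ of order $6$ such that $|H_1\cap H_2|=3$ and $|H_3\cap H_4|=3$.
   Context: $\pi_e(G)$ is the set of orders of elements of $G$. *)

theory Defs
  imports "HOL-Algebra.Multiplicative_Group" "HOL-Algebra.Generated_Groups"
begin

definition element_orders :: "('a, 'b) monoid_scheme \<Rightarrow> nat set" where
  "element_orders G = {group.ord G x | x. x \<in> carrier G}"

definition cyclic_subgroup :: "('a, 'b) monoid_scheme \<Rightarrow> 'a set \<Rightarrow> bool" where
  "cyclic_subgroup G H \<longleftrightarrow> (\<exists>x \<in> carrier G. H = generate G {x})"

end

theory Submission
  imports Defs
begin

text \<open>Let \<open>a\<close> be an element of order 3 in \<open>H\<^sub>1 \<inter> H\<^sub>2\<close>. As \<open>H\<^sub>3 \<inter> H\<^sub>4\<close> is the unique subgroup of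
  order 3 of both \<open>H\<^sub>3\<close> and \<open>H\<^sub>4\<close>, the element \<open>a\<close> lies in neither or in both, so exactly 2 or 4
  cyclic subgroups of order 6 contain \<open>a\<close>. But \<open>t \<mapsto> \<langle>t a\<rangle>\<close> is a bijection from the involutions
  of the centralizer \<open>C(a)\<close> onto these subgroups (with inverse \<open>\<langle>y\<rangle> \<mapsto> y\<^sup>3\<close>). Hence \<open>C(a)\<close> contains an
  involution, so has even order, and a group of even order has an odd number of involutions:
  inversion pairs off all other non-identity elements.\<close>

lemma even_card_if_fixpoint_free_involution:
  assumes "finite A" "\<And>x. x \<in> A \<Longrightarrow> f x \<in> A" "\<And>x. x \<in> A \<Longrightarrow> f (f x) = x"
    "\<And>x. x \<in> A \<Longrightarrow> f x \<noteq> x"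
  shows "even (card A)"
  using assms
proof (induction "card A" arbitrary: A rule: less_induct)
  case less
  show ?case
  proof (cases "A = {}")
    case False
    then obtain x where x: "x \<in> A" by blast
    have fx: "f x \<in> A" "f x \<noteq> x" using less x by auto
    let ?B = "A - {x, f x}"
    have "card {x, f x} = 2" "{x, f x} \<subseteq> A" using x fx by auto
    then have card_B: "card A = card ?B + 2"
      using less(2) card_Diff_subset[of "{x, f x}" A] card_mono[of A "{x, f x}"] by simp
    have "even (card ?B)"
    proof (rule less(1))
      show "card ?B < card A" using card_B by simp
      show "finite ?B" using less(2) by simp
      fix y assume "y \<in> ?B"
      then have y: "y \<in> A" "y \<noteq> x" "y \<noteq> f x" by auto
      have "f y \<noteq> x" using y less(4)[OF y(1)] by auto
      moreover have "f y \<noteq> f x"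
      proof
        assume "f y = f x"
        then have "f (f y) = f (f x)" by simp
        then show False using y less(4) x by simp
      qed
      ultimately show "f y \<in> ?B" using less(3) y by simp
      show "f (f y) = y" "f y \<noteq> y" using y less(4,5) by auto
    qed
    then show ?thesis using card_B by simp
  qed simp
qed

lemma nat_dvd_2_iff: "(d::nat) dvd 2 \<longleftrightarrow> d = 1 \<or> d = 2"
proof
  show "d dvd 2 \<Longrightarrow> d = 1 \<or> d = 2" using dvd_imp_le[of d 2] by (cases d) auto
qed auto

definition centralizer :: "('a, 'b) monoid_scheme \<Rightarrow> 'a \<Rightarrow> 'a set" where
  "centralizer G a = {x \<in> carrier G. x \<otimes>\<^bsub>G\<^esub> a = a \<otimes>\<^bsub>G\<^esub> x}"

context group begin

lemma subgroup_centralizer: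
  assumes "a \<in> carrier G"
  shows "subgroup (centralizer G a) G"
proof (rule subgroupI)
  fix x y assume x: "x \<in> centralizer G a" and y: "y \<in> centralizer G a"
  have xc: "x \<in> carrier G" "x \<otimes> a = a \<otimes> x" and yc: "y \<in> carrier G" "y \<otimes> a = a \<otimes> y"
    using x y by (auto simp: centralizer_def)
  have "inv x \<otimes> a = inv x \<otimes> (a \<otimes> x) \<otimes> inv x"
    using xc(1) assms by (simp add: m_assoc)
  also have "\<dots> = inv x \<otimes> (x \<otimes> a) \<otimes> inv x"
    using xc(2) by simp
  also have "\<dots> = a \<otimes> inv x"
    using xc(1) assms by (simp flip: m_assoc)
  finally show "inv x \<in> centralizer G a"
    using xc by (simp add: centralizer_def)
  have "x \<otimes> y \<otimes> a = x \<otimes> (a \<otimes> y)"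
    using xc yc assms by (simp add: m_assoc)
  also have "\<dots> = a \<otimes> (x \<otimes> y)"
    using xc yc assms by (simp flip: m_assoc)
  finally show "x \<otimes> y \<in> centralizer G a"
    using xc yc by (simp add: centralizer_def)
qed (use assms in \<open>auto simp: centralizer_def\<close>)

lemma even_card_subgroup_with_involution:
  assumes "subgroup H G" "finite H" "t \<in> H" "ord t = 2"
  shows "even (card H)"
proof -
  have t: "t \<in> carrier G" using subgroup.mem_carrier[OF assms(1,3)] .
  have tt: "t \<otimes> t = \<one>" using pow_eq_id[OF t, of 2] assms(4) t by (simp add: numeral_2_eq_2)
  have "t \<noteq> \<one>" using assms(4) by auto
  show ?thesis
  proof (rule even_card_if_fixpoint_free_involution[OF assms(2)])
    fix x assume x: "x \<in> H"
    then have "x \<in> carrier G" using subgroup.mem_carrier[OF assms(1)] by blast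
    show "x \<otimes> t \<in> H" using subgroup.m_closed[OF assms(1) x assms(3)] .
    show "x \<otimes> t \<otimes> t = x" using \<open>x \<in> carrier G\<close> t tt by (simp add: m_assoc)
    show "x \<otimes> t \<noteq> x" using \<open>x \<in> carrier G\<close> t \<open>t \<noteq> \<one>\<close> by simp
  qed
qed

lemma inv_eq_self_iff:
  assumes "x \<in> carrier G"
  shows "inv x = x \<longleftrightarrow> x = \<one> \<or> ord x = 2"
proof -
  have "inv x = x \<longleftrightarrow> x \<otimes> x = \<one>"
    using assms inv_equality[of x x] r_inv[of x] by metis
  also have "\<dots> \<longleftrightarrow> x [^] (2::nat) = \<one>"
    using assms by (simp add: numeral_2_eq_2)
  also have "\<dots> \<longleftrightarrow> ord x dvd 2" using pow_eq_id[OF assms] .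
  also have "\<dots> \<longleftrightarrow> ord x = 1 \<or> ord x = 2" using nat_dvd_2_iff .
  finally show ?thesis using ord_eq_1[OF assms] by simp
qed

lemma odd_card_involutions:
  assumes H: "subgroup H G" "finite H" and even: "even (card H)"
  shows "odd (card {x \<in> H. ord x = 2})"
proof -
  let ?S = "{x \<in> H. inv x = x}"
  have carrier: "x \<in> carrier G" if "x \<in> H" for x using subgroup.mem_carrier[OF H(1) that] .
  have "even (card (H - ?S))"
  proof (rule even_card_if_fixpoint_free_involution[of _ "\<lambda>x. inv x"])
    fix x assume "x \<in> H - ?S"
    then show "inv x \<in> H - ?S" "inv (inv x) = x" "inv x \<noteq> x"
      using carrier subgroup.m_inv_closed[OF H(1)] by auto
  qed (use H in simp)
  moreover have "card H = card ?S + card (H - ?S)"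
    using H(2) card_Diff_subset[of ?S H] card_mono[of H ?S] by fastforce
  moreover have "?S = insert \<one> {x \<in> H. ord x = 2}"
    using carrier inv_eq_self_iff subgroup.one_closed[OF H(1)] by auto
  moreover have "\<one> \<notin> {x \<in> H. ord x = 2}" by simp
  ultimately show ?thesis using even H(2) by simp
qed

lemma pow_mod_ord:
  assumes "x \<in> carrier G"
  shows "x [^] (n mod ord x) = x [^] n"
proof -
  have "x [^] n = x [^] (ord x * (n div ord x)) \<otimes> x [^] (n mod ord x)"
    using assms by (simp add: nat_pow_mult)
  then show ?thesis using assms by (simp flip: nat_pow_pow)
qed

lemma ord_mult_of_coprime:
  assumes comm: "x \<otimes> y = y \<otimes> x" and xy: "x \<in> carrier G" "y \<in> carrier G"
    and coprime: "coprime (ord x) (ord y)"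
  shows "ord (x \<otimes> y) = ord x * ord y"
proof (rule dvd_antisym)
  show "ord (x \<otimes> y) dvd ord x * ord y" using ord_mul_divides[OF assms(1-3)] .
  let ?n = "ord (x \<otimes> y)"
  have "x [^] (?n * k) \<otimes> y [^] (?n * k) = \<one>" for k
  proof -
    have "(x \<otimes> y) [^] (?n * k) = \<one>" using xy by (simp flip: nat_pow_pow)
    then show ?thesis using pow_mult_distrib[OF comm xy] by simp
  qed
  moreover have "x [^] (?n * ord x) = \<one>" "y [^] (?n * ord y) = \<one>"
    using xy by (simp_all add: mult.commute[of ?n] flip: nat_pow_pow)
  ultimately have "x [^] (?n * ord y) = \<one>" "y [^] (?n * ord x) = \<one>"
    using xy by (metis nat_pow_closed r_one, metis nat_pow_closed l_one)
  then have "ord x dvd ?n * ord y" "ord y dvd ?n * ord x" using xy by (simp_all add: pow_eq_id)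
  then have "ord x dvd ?n" "ord y dvd ?n"
    using coprime by (simp_all add: coprime_dvd_mult_left_iff coprime_commute)
  then show "ord x * ord y dvd ?n" using coprime by (simp add: divides_mult)
qed

lemma pow_mem_generate: "y \<in> carrier G \<Longrightarrow> y [^] (k::nat) \<in> generate G {y}"
  using generate_pow[of y] by (auto simp flip: int_pow_int)

lemma generate_singleton_commute:
  assumes "y \<in> carrier G" "x \<in> generate G {y}" "z \<in> generate G {y}"
  shows "x \<otimes> z = z \<otimes> x"
proof -
  obtain i j :: int where "x = y [^] i" "z = y [^] j" using assms generate_pow by auto
  then show ?thesis using assms(1) by (simp flip: int_pow_mult add: add.commute)
qed

lemma mem_generate_pow_if_pow_eq_one:
  assumes y: "y \<in> carrier G" "ord y = d * m" and "0 < d"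
    and h: "h \<in> generate G {y}" "h [^] d = \<one>"
  shows "h \<in> generate G {y [^] m}"
proof -
  obtain k :: int where k: "h = y [^] k" using h(1) generate_pow[OF y(1)] by auto
  have "y [^] (k * int d) = \<one>" using y(1) h(2) k by (simp add: int_pow_pow flip: int_pow_int)
  then have "int d * int m dvd k * int d" using int_pow_eq_id[OF y(1)] y(2) by simp
  then have "int m dvd k" using \<open>0 < d\<close> by (simp add: mult.commute)
  then obtain j where "k = int m * j" by (rule dvdE)
  then have "h = (y [^] m) [^] j" using k y(1) by (simp add: int_pow_pow flip: int_pow_int)
  then show ?thesis using generate_pow[of "y [^] m"] y(1) by auto
qed

lemma pow_card_subgroup_eq_one:
  assumes "subgroup K G" "k \<in> K"
  shows "k [^] card K = \<one>"
proof -
  interpret K: group "G\<lparr>carrier := K\<rparr>" using subgroup_imp_group[OF assms(1)] .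
  have "k [^]\<^bsub>G\<lparr>carrier := K\<rparr>\<^esub> order (G\<lparr>carrier := K\<rparr>) = \<one>"
    using K.pow_order_eq_1 assms(2) by simp
  then show ?thesis by (simp add: order_def flip: nat_pow_consistent)
qed

lemma subgroup_of_cyclic_eq_generate_pow:
  assumes y: "y \<in> carrier G" "ord y = d * m" "0 < d" "0 < m"
    and K: "subgroup K G" "K \<subseteq> generate G {y}" "card K = d"
  shows "K = generate G {y [^] m}"
proof (rule card_subset_eq)
  have "card (generate G {y [^] m}) = d"
    using y ord_pow[of y m] by (simp flip: generate_pow_card)
  then show "finite (generate G {y [^] m})" "card K = card (generate G {y [^] m})"
    using K(3) y(3) by (auto intro: card_ge_0_finite)
  show "K \<subseteq> generate G {y [^] m}"
    using K pow_card_subgroup_eq_one mem_generate_pow_if_pow_eq_one[OF y(1-3)] by blast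
qed

lemma generate_of_ord_2:
  assumes "x \<in> carrier G" "ord x = 2"
  shows "generate G {x} = {\<one>, x}"
proof (rule sym, rule card_subset_eq)
  have card: "card (generate G {x}) = 2" using assms by (simp flip: generate_pow_card)
  then show "finite (generate G {x})" by (intro card_ge_0_finite) simp
  show "{\<one>, x} \<subseteq> generate G {x}"
    using assms(1) generate.one generate.incl[of x "{x}"] by auto
  have "x \<noteq> \<one>" using assms(2) by auto
  then show "card {\<one>, x} = card (generate G {x})" using card by simp
qed

lemma involution_in_cyclic:
  assumes y: "y \<in> carrier G" "ord y = 2 * m" "0 < m"
    and h: "h \<in> generate G {y}" "ord h = 2"
  shows "h = y [^] m"
proof -
  have "h \<in> carrier G" using h(1) generate_incl[of "{y}"] y(1) by blast
  then have "h [^] (2::nat) = \<one>" using h(2) pow_eq_id by simp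
  then have "h \<in> generate G {y [^] m}" using mem_generate_pow_if_pow_eq_one[OF y(1,2)] h(1) by simp
  moreover have "ord (y [^] m) = 2" using y ord_pow[of y m] by simp
  ultimately have "h \<in> {\<one>, y [^] m}" using generate_of_ord_2 y(1) by simp
  moreover have "h \<noteq> \<one>" using h(2) by auto
  ultimately show ?thesis by simp
qed

lemma generate_eq_if_ord_eq:
  assumes "y \<in> carrier G" "ord y \<noteq> 0" "z \<in> generate G {y}" "ord z = ord y"
  shows "generate G {z} = generate G {y}"
proof (rule card_subset_eq)
  have z: "z \<in> carrier G" using assms(1,3) generate_incl[of "{y}"] by blast
  show "finite (generate G {y})" using assms(1,2) generate_pow_card[of y] card_ge_0_finite by force
  show "generate G {z} \<subseteq> generate G {y}"
    using assms(1,3) generate_subgroup_incl generate_is_subgroup[of "{y}"] by simp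
  show "card (generate G {z}) = card (generate G {y})"
    using assms(1,4) z by (simp flip: generate_pow_card)
qed

lemma cyclic_subgroup_card_iff:
  "cyclic_subgroup G H \<and> card H = n \<longleftrightarrow> (\<exists>y\<in>carrier G. ord y = n \<and> H = generate G {y})"
  unfolding cyclic_subgroup_def using generate_pow_card by auto

lemma involution_times_order_3:
  assumes "t \<in> carrier G" "a \<in> carrier G" "ord t = 2" "ord a = 3" "t \<otimes> a = a \<otimes> t"
  shows "ord (t \<otimes> a) = 6" "(t \<otimes> a) [^] (3::nat) = t" "(t \<otimes> a) [^] (4::nat) = a"
proof -
  show "ord (t \<otimes> a) = 6" using ord_mult_of_coprime[OF assms(5,1,2)] assms(3,4) by simp
  have "(t \<otimes> a) [^] n = t [^] (n mod 2) \<otimes> a [^] (n mod 3)" for n :: nat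
    using pow_mult_distrib[OF assms(5,1,2)] pow_mod_ord[OF assms(1), of n] pow_mod_ord[OF assms(2), of n]
      assms(3,4) by simp
  then show "(t \<otimes> a) [^] (3::nat) = t" "(t \<otimes> a) [^] (4::nat) = a" using assms(1,2) by simp_all
qed

lemma bij_betw_centralizer_involutions_cyclic_subgroups:
  assumes a: "a \<in> carrier G" "ord a = 3"
  shows "bij_betw (\<lambda>t. generate G {t \<otimes> a}) {t \<in> centralizer G a. ord t = 2}
           {H. cyclic_subgroup G H \<and> card H = 6 \<and> a \<in> H}"
proof (rule bij_betw_imageI)
  have prod: "ord (t \<otimes> a) = 6" "(t \<otimes> a) [^] (3::nat) = t" "(t \<otimes> a) [^] (4::nat) = a"
    "t \<in> carrier G" "t \<otimes> a \<in> carrier G"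
    if "t \<in> {t \<in> centralizer G a. ord t = 2}" for t
    using that involution_times_order_3[of t a] a by (auto simp: centralizer_def)
  show "inj_on (\<lambda>t. generate G {t \<otimes> a}) {t \<in> centralizer G a. ord t = 2}"
  proof (rule inj_onI)
    fix t s assume t: "t \<in> {t \<in> centralizer G a. ord t = 2}" and s: "s \<in> {t \<in> centralizer G a. ord t = 2}"
      and eq: "generate G {t \<otimes> a} = generate G {s \<otimes> a}"
    have "t \<in> generate G {s \<otimes> a}" using pow_mem_generate[of "t \<otimes> a" 3] prod[OF t] eq by simp
    then have "t = (s \<otimes> a) [^] (3::nat)" using involution_in_cyclic[of "s \<otimes> a" 3 t] prod[OF s] t by simp
    then show "t = s" using prod[OF s] by simp
  qed
  show "(\<lambda>t. generate G {t \<otimes> a}) ` {t \<in> centralizer G a. ord t = 2}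
    = {H. cyclic_subgroup G H \<and> card H = 6 \<and> a \<in> H}"
  proof (intro equalityI subsetI)
    fix H assume "H \<in> (\<lambda>t. generate G {t \<otimes> a}) ` {t \<in> centralizer G a. ord t = 2}"
    then obtain t where t: "t \<in> {t \<in> centralizer G a. ord t = 2}" "H = generate G {t \<otimes> a}" by blast
    then have "a \<in> H" using pow_mem_generate[of "t \<otimes> a" 4] prod[OF t(1)] by simp
    then show "H \<in> {H. cyclic_subgroup G H \<and> card H = 6 \<and> a \<in> H}"
      using cyclic_subgroup_card_iff prod[OF t(1)] t(2) by auto
  next
    fix H assume H: "H \<in> {H. cyclic_subgroup G H \<and> card H = 6 \<and> a \<in> H}"
    then obtain y where y: "y \<in> carrier G" "ord y = 6" "H = generate G {y}"
      using cyclic_subgroup_card_iff[of H 6] by auto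
    from H have "a \<in> H" by simp
    let ?t = "y [^] (3::nat)"
    have t: "?t \<in> generate G {y}" "ord ?t = 2" using pow_mem_generate y ord_pow[of y 3] by auto
    have comm: "?t \<otimes> a = a \<otimes> ?t" using generate_singleton_commute y t \<open>a \<in> H\<close> by blast
    have "?t \<otimes> a \<in> generate G {y}"
      using subgroup.m_closed[OF generate_is_subgroup] t \<open>a \<in> H\<close> y by auto
    moreover have "ord (?t \<otimes> a) = 6" using involution_times_order_3 y(1) a t(2) comm by simp
    ultimately have "H = generate G {?t \<otimes> a}" using generate_eq_if_ord_eq y by simp
    moreover have "?t \<in> centralizer G a" using comm y(1) by (simp add: centralizer_def)
    ultimately show "H \<in> (\<lambda>t. generate G {t \<otimes> a}) ` {t \<in> centralizer G a. ord t = 2}"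
      using t(2) by blast
  qed
qed

lemma odd_card_cyclic_subgroups_of_order_6_containing:
  assumes "finite (carrier G)" "a \<in> carrier G" "ord a = 3"
    and "a \<in> H" "cyclic_subgroup G H" "card H = 6"
  shows "odd (card {H. cyclic_subgroup G H \<and> card H = 6 \<and> a \<in> H})"
proof -
  note bij = bij_betw_centralizer_involutions_cyclic_subgroups[OF assms(2,3)]
  then obtain t where "t \<in> {t \<in> centralizer G a. ord t = 2}"
    using assms(4-6) by (auto simp: bij_betw_def)
  moreover have C: "subgroup (centralizer G a) G" "finite (centralizer G a)"
    using subgroup_centralizer[OF assms(2)] assms(1) by (auto simp: centralizer_def)
  ultimately have "odd (card {t \<in> centralizer G a. ord t = 2})"
    using odd_card_involutions even_card_subgroup_with_involution by blast
  then show ?thesis using bij_betw_same_card[OF bij] by simp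
qed

lemma cyclic_6_inter_card_3:
  assumes "y \<in> carrier G" "ord y = 6" "subgroup H G" "card (generate G {y} \<inter> H) = 3"
  shows "generate G {y} \<inter> H = generate G {y [^] (2::nat)}"
proof (rule subgroup_of_cyclic_eq_generate_pow[of y 3])
  show "subgroup (generate G {y} \<inter> H) G"
    using assms(1,3) generate_is_subgroup[of "{y}"] subgroups_Inter_pair by simp
qed (use assms in simp_all)

lemma order_3_element_of_paired_cyclic_subgroups:
  assumes Hs: "{H. cyclic_subgroup G H \<and> card H = 6} = {H1, H2, H3, H4}"
    and "card (H1 \<inter> H2) = 3" "card (H3 \<inter> H4) = 3"
  obtains a where "a \<in> carrier G" "ord a = 3" "a \<in> H1"
    "{H. cyclic_subgroup G H \<and> card H = 6 \<and> a \<in> H} \<in> {{H1, H2}, {H1, H2, H3, H4}}"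
proof -
  have gen: "\<exists>y\<in>carrier G. ord y = 6 \<and> H = generate G {y}" if "H \<in> {H1, H2, H3, H4}" for H
    using that cyclic_subgroup_card_iff[of H 6] by (simp flip: Hs)
  obtain y1 where y1: "y1 \<in> carrier G" "ord y1 = 6" "H1 = generate G {y1}" using gen[of H1] by auto
  obtain y2 where y2: "y2 \<in> carrier G" "H2 = generate G {y2}" using gen[of H2] by auto
  obtain y3 where y3: "y3 \<in> carrier G" "ord y3 = 6" "H3 = generate G {y3}" using gen[of H3] by auto
  obtain y4 where y4: "y4 \<in> carrier G" "ord y4 = 6" "H4 = generate G {y4}" using gen[of H4] by auto
  note y = y1 y2 y3 y4
  have H12: "H1 \<inter> H2 = generate G {y1 [^] (2::nat)}"
    using cyclic_6_inter_card_3[of y1 H2] y assms(2) generate_is_subgroup by simp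
  have H34: "H3 \<inter> H4 = generate G {y3 [^] (2::nat)}" "H3 \<inter> H4 = generate G {y4 [^] (2::nat)}"
    using cyclic_6_inter_card_3[of y3 H4] cyclic_6_inter_card_3[of y4 H3] y assms(3)
      generate_is_subgroup by (simp_all add: Int_commute)
  define a where "a = y1 [^] (2::nat)"
  have a: "a \<in> carrier G" "ord a = 3" using y(1,2) ord_pow[of y1 2] by (simp_all add: a_def)
  have "a \<in> H1" "a \<in> H2" using H12 generate.incl[of a "{a}"] a_def by auto
  moreover have "a \<in> H3 \<longleftrightarrow> a \<in> H4"
  proof -
    have "a [^] (3::nat) = \<one>" using a pow_eq_id by simp
    then have "a \<in> H3 \<Longrightarrow> a \<in> H3 \<inter> H4" "a \<in> H4 \<Longrightarrow> a \<in> H3 \<inter> H4"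
      using mem_generate_pow_if_pow_eq_one[of y3 3 2 a] mem_generate_pow_if_pow_eq_one[of y4 3 2 a]
        y3 y4 H34 by simp_all
    then show ?thesis by blast
  qed
  ultimately have "{H \<in> {H1, H2, H3, H4}. a \<in> H} = (if a \<in> H3 then {H1, H2, H3, H4} else {H1, H2})"
    by auto
  moreover have "{H. cyclic_subgroup G H \<and> card H = 6 \<and> a \<in> H} = {H \<in> {H1, H2, H3, H4}. a \<in> H}"
    unfolding Hs[symmetric] by blast
  ultimately have "{H. cyclic_subgroup G H \<and> card H = 6 \<and> a \<in> H} \<in> {{H1, H2}, {H1, H2, H3, H4}}"
    by simp
  with a \<open>a \<in> H1\<close> show thesis by (rule that)
qed

end

theorem theorem3p4:
  fixes G :: "('a, 'b) monoid_scheme"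
  assumes "group G"
    and "finite (carrier G)"
    and "element_orders G \<subseteq> {1, 2, 3, 4, 6}"
  shows "\<not> (\<exists>H1 H2 H3 H4.
            {H. cyclic_subgroup G H \<and> card H = 6} = {H1, H2, H3, H4}
          \<and> card {H1, H2, H3, H4} = 4
          \<and> card (H1 \<inter> H2) = 3 \<and> card (H3 \<inter> H4) = 3)"
proof (rule notI, elim exE conjE)
  interpret group G by fact
  fix H1 H2 H3 H4
  assume Hs: "{H. cyclic_subgroup G H \<and> card H = 6} = {H1, H2, H3, H4}"
    and distinct: "card {H1, H2, H3, H4} = 4"
    and "card (H1 \<inter> H2) = 3" "card (H3 \<inter> H4) = 3"
  obtain a where a: "a \<in> carrier G" "ord a = 3" "a \<in> H1"
    and X: "{H. cyclic_subgroup G H \<and> card H = 6 \<and> a \<in> H} \<in> {{H1, H2}, {H1, H2, H3, H4}}"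
    using order_3_element_of_paired_cyclic_subgroups[OF Hs \<open>card (H1 \<inter> H2) = 3\<close>
      \<open>card (H3 \<inter> H4) = 3\<close>] by blast
  have "H1 \<noteq> H2" using distinct by (auto simp: card_insert_if split: if_splits)
  then have "even (card {H. cyclic_subgroup G H \<and> card H = 6 \<and> a \<in> H})"
    using X distinct by (elim insertE emptyE) simp_all
  moreover have "H1 \<in> {H. cyclic_subgroup G H \<and> card H = 6}" using Hs by simp
  ultimately show False
    using odd_card_cyclic_subgroups_of_order_6_containing[OF assms(2) a] by simp
qed

end
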